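(* In the flow-sampling problem with $M\ge1$ devices, accuracies $\varphi_i\in(0,1]$ and external sampling probabilities $p_i\in(0,1)$, fix an integer $G\ge1$ and let the largest-order-statistic policy be the policy that in every slot draws $G$ integers independently and uniformly from $\{1,\dots,M\}$ (with replacement, independently of the state and of the past) and samples the device indexed by the largest of them. Its average cost is $$J_{\mathrm{order}}=\sum_{i=1}^{M}\frac{\varphi_i(1-q_i)(1-p_i)}{1-(1-q_i)(1-p_i)},\qquad q_i=\frac{i^G-(i-1)^G}{M^G}.$$ Moreover, if $p_1=\dots=p_M=p\in(0,1)$ and $\varphi_i=\sigma^{M-i}$ with $\sigma\in(0,1)$, then for fixed $G$, $$\lim_{M\to\infty}J_{\mathrm{order}}=\frac{1-p}{(1-\sigma)p}.$$
   Context: Flow-sampling model: a flow path passes through $M$ devices indexed $1,\dots,M$. Time is slotted, $t=0,1,2,\dots$. Each device $i$ has an accuracy $\varphi_i$ and a counter $n_i^t\in\{0,1,2,\dots\}$, with $n_i^0=0$. At the start of each slot $t$ the controller chooses an action $a^t\in\{1,\dots,M\}$ (the device it samples) according to a policy. Independently of everything else, for each $i$ and $t$ an event $H_i^t$ occurs with probability $p_i$, independently across $i$ and $t$. Counter dynamics: if $a^t=i$ then $n_i^{t+1}=0$; if $a^t\ne i$ then $n_i^{t+1}=0$ if $H_i^t$ occurs and $n_i^{t+1}=n_i^t+1$ otherwise. The immediate cost is $C(s^t)=\sum_{i=1}^M\varphi_i n_i^t$ and the average cost of policy $\mu$ is $J_\mu=\lim_{T\to\infty}\mathbb{E}_\mu\left[\frac1T\sum_{t=0}^{T-1}C(s^t)\right]$.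 *)

theory Defs
  imports "HOL-Probability.Probability"
begin

text \<open>A state is a counter vector s :: nat => nat, where s i = n_i
  for devices i in {1..M} (and s i = 0 outside).\<close>

type_synonym fs_state = "nat \<Rightarrow> nat"

definition fs_next :: "nat \<Rightarrow> fs_state \<Rightarrow> nat \<Rightarrow> (nat \<Rightarrow> bool) \<Rightarrow> fs_state" where
  "fs_next M s a H = (\<lambda>i. if i \<in> {1..M} then
      (if a = i then 0 else if H i then 0 else s i + 1) else 0)"

primrec fs_state_dist ::
  "nat \<Rightarrow> (nat \<Rightarrow> real) \<Rightarrow> (fs_state \<Rightarrow> nat pmf) \<Rightarrow> nat \<Rightarrow> fs_state pmf" where
  "fs_state_dist M p mu 0 = return_pmf (\<lambda>_. 0)"
| "fs_state_dist M p mu (Suc t) =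
     do { s \<leftarrow> fs_state_dist M p mu t;
          a \<leftarrow> mu s;
          H \<leftarrow> Pi_pmf {1..M} False (\<lambda>i. bernoulli_pmf (p i));
          return_pmf (fs_next M s a H) }"

definition fs_cost :: "nat \<Rightarrow> (nat \<Rightarrow> real) \<Rightarrow> fs_state \<Rightarrow> real" where
  "fs_cost M phi s = (\<Sum>i=1..M. phi i * real (s i))"

definition fs_avg_cost ::
  "nat \<Rightarrow> (nat \<Rightarrow> real) \<Rightarrow> (nat \<Rightarrow> real) \<Rightarrow> (fs_state \<Rightarrow> nat pmf) \<Rightarrow> nat \<Rightarrow> real" where
  "fs_avg_cost M phi p mu T =
     (1 / real T) * (\<Sum>t<T. measure_pmf.expectation (fs_state_dist M p mu t) (fs_cost M phi))"

definition fs_J ::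
  "nat \<Rightarrow> (nat \<Rightarrow> real) \<Rightarrow> (nat \<Rightarrow> real) \<Rightarrow> (fs_state \<Rightarrow> nat pmf) \<Rightarrow> real" where
  "fs_J M phi p mu = lim (fs_avg_cost M phi p mu)"

definition order_policy :: "nat \<Rightarrow> nat \<Rightarrow> fs_state \<Rightarrow> nat pmf" where
  "order_policy M G = (\<lambda>_. map_pmf (\<lambda>xs. Max (set xs)) (replicate_pmf G (pmf_of_set {1..M})))"

end

theory Submission
  imports Defs
begin

text \<open>A policy that ignores the state and draws its action from a fixed distribution A makes
  every counter n_i a chain that grows by one with probability c_i = (1 - A{i}) (1 - p_i) and is
  reset otherwise. Hence E[n_i^t] = c_i/(1 - c_i) (1 - c_i^t), and the Cesaro averages of the
  expected cost converge to the sum of phi_i c_i/(1 - c_i). For the largest-order-statistic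
  policy, A{i} = (i^G - (i - 1)^G)/M^G is the probability that the maximum of G uniform draws
  equals i.

  For the limit in M, these probabilities are at most G/M, the odds c/(1 - c) move by at most
  (1 - p)/p^2 times that amount away from their value (1 - p)/p at A{i} = 0, and the weights
  sigma^(M - i) sum to at most 1/(1 - sigma). So J differs from (1 - p)/p (1 - sigma^M)/(1 - sigma)
  by O(1/M).\<close>

lemma emeasure_replicate_pmf_set_subset:
  "emeasure (replicate_pmf n P) {xs. set xs \<subseteq> A} = emeasure P A ^ n"
proof (induction n)
  case 0
  then show ?case by simp
next
  case (Suc n)
  let ?S = "{xs. set xs \<subseteq> A}"
  have "emeasure (replicate_pmf (Suc n) P) ?S =
        (\<integral>\<^sup>+x. \<integral>\<^sup>+xs. indicator A x * indicator ?S xs \<partial>replicate_pmf n P \<partial>P)"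
    by (simp add: indicator_def of_bool_conj)
  also have "\<dots> = (\<integral>\<^sup>+x. emeasure (replicate_pmf n P) ?S * indicator A x \<partial>P)"
    by (simp add: nn_integral_cmult mult.commute)
  also have "\<dots> = emeasure P A * emeasure (replicate_pmf n P) ?S"
    by (simp add: nn_integral_multc mult.commute)
  finally show ?case
    using Suc by simp
qed

lemma measure_replicate_pmf_set_subset:
  "measure (replicate_pmf n P) {xs. set xs \<subseteq> A} = measure P A ^ n"
  using emeasure_replicate_pmf_set_subset[of n P A]
  by (simp add: measure_pmf.emeasure_eq_measure ennreal_power)

lemma pmf_Max_replicate_pmf_of_set:
  assumes n: "n \<ge> 1" and i: "i \<in> {1..M}"
  shows "pmf (map_pmf (\<lambda>xs. Max (set xs)) (replicate_pmf n (pmf_of_set {1..M}))) i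
         = (real i ^ n - real (i - 1) ^ n) / real M ^ n"
proof -
  let ?U = "pmf_of_set {1..M::nat}"
  let ?R = "replicate_pmf n ?U"
  let ?below = "\<lambda>B. {xs. set xs \<subseteq> B}"
  have U: "measure ?U {..k} = real k / real M" if "k \<le> M" for k
  proof -
    have "{1..M} \<inter> {..k} = {1..k}" using that by auto
    then show ?thesis using i that by (simp add: measure_pmf_of_set min_absorb2)
  qed
  have nonempty: "xs \<noteq> []" if "xs \<in> set_pmf ?R" for xs
    using that n i by (auto simp: set_replicate_pmf)
  have Max_eq: "Max (set xs) = i \<longleftrightarrow> xs \<in> ?below {..i} - ?below {..i - 1}" if "xs \<noteq> []" for xs
  proof -
    have "set xs \<subseteq> {..k} \<longleftrightarrow> Max (set xs) \<le> k" for k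
      using that by (subst Max_le_iff) auto
    then show ?thesis
      using i by (simp only: mem_Collect_eq Diff_iff) arith
  qed
  have "pmf (map_pmf (\<lambda>xs. Max (set xs)) ?R) i = measure ?R ({xs. Max (set xs) = i} \<inter> set_pmf ?R)"
    by (simp add: pmf_map vimage_def measure_Int_set_pmf)
  also have "{xs. Max (set xs) = i} \<inter> set_pmf ?R = (?below {..i} - ?below {..i - 1}) \<inter> set_pmf ?R"
    using Max_eq nonempty by blast
  also have "measure ?R \<dots> = measure ?R (?below {..i} - ?below {..i - 1})"
    by (rule measure_Int_set_pmf)
  also have "\<dots> = measure ?R (?below {..i}) - measure ?R (?below {..i - 1})"
    by (rule measure_pmf.finite_measure_Diff) auto
  also have "\<dots> = (real i / real M) ^ n - (real (i - 1) / real M) ^ n"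
    using i U[of i] U[of "i - 1"] by (auto simp: measure_replicate_pmf_set_subset simp del: of_nat_diff)
  finally show ?thesis
    by (simp add: power_divide diff_divide_distrib)
qed

definition growth_prob :: "nat pmf \<Rightarrow> (nat \<Rightarrow> real) \<Rightarrow> nat \<Rightarrow> real" where
  "growth_prob A p i = (1 - pmf A i) * (1 - p i)"

lemma growth_prob_nonneg: "p i \<le> 1 \<Longrightarrow> 0 \<le> growth_prob A p i"
  unfolding growth_prob_def by (simp add: pmf_le_1)

lemma growth_prob_less_1:
  assumes "0 < p i" "p i \<le> 1"
  shows "growth_prob A p i < 1"
proof -
  have "growth_prob A p i \<le> 1 * (1 - p i)"
    unfolding growth_prob_def using assms(2) by (intro mult_right_mono) auto
  then show ?thesis
    using assms(1) by simp
qed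

lemma nn_integral_fs_next_counter:
  assumes i: "i \<in> {1..M}" and p: "0 \<le> p i" "p i \<le> 1"
  shows "(\<integral>\<^sup>+H. real (fs_next M s a H i) \<partial>Pi_pmf {1..M} False (\<lambda>j. bernoulli_pmf (p j)))
         = (if a = i then 0 else ennreal ((1 - p i) * (real (s i) + 1)))"
proof (cases "a = i")
  case True
  then show ?thesis using i by (simp add: fs_next_def)
next
  case False
  let ?H = "Pi_pmf {1..M} False (\<lambda>j. bernoulli_pmf (p j))"
  let ?g = "\<lambda>b. ennreal (if b then 0 else real (s i) + 1)"
  have "(\<integral>\<^sup>+H. real (fs_next M s a H i) \<partial>?H) = (\<integral>\<^sup>+H. ?g (H i) \<partial>?H)"
    using i False by (intro nn_integral_cong) (auto simp: fs_next_def)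
  also have "\<dots> = (\<integral>\<^sup>+b. ?g b \<partial>map_pmf (\<lambda>H. H i) ?H)"
    by simp
  also have "map_pmf (\<lambda>H. H i) ?H = bernoulli_pmf (p i)"
    using i by (simp add: Pi_pmf_component)
  also have "(\<integral>\<^sup>+b. ?g b \<partial>bernoulli_pmf (p i)) = ennreal ((1 - p i) * (real (s i) + 1))"
    using p by (simp add: ennreal_mult ennreal_plus mult.commute)
  finally show ?thesis
    using False by simp
qed

lemma nn_integral_counter_Suc:
  assumes i: "i \<in> {1..M}" and p: "0 \<le> p i" "p i \<le> 1"
  shows "(\<integral>\<^sup>+s. real (s i) \<partial>fs_state_dist M p (\<lambda>_. A) (Suc t))
         = ennreal (growth_prob A p i) * ((\<integral>\<^sup>+s. real (s i) \<partial>fs_state_dist M p (\<lambda>_. A) t) + 1)"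
proof -
  let ?D = "fs_state_dist M p (\<lambda>_. A) t"
  let ?K = "\<lambda>s::fs_state. ennreal ((1 - p i) * (real (s i) + 1))"
  have not_i: "emeasure A (- {i}) = ennreal (1 - pmf A i)"
    using measure_pmf.prob_compl[of "{i}" A]
    by (simp add: measure_pmf.emeasure_eq_measure measure_pmf_single Compl_eq_Diff_UNIV)
  have "(\<integral>\<^sup>+s. real (s i) \<partial>fs_state_dist M p (\<lambda>_. A) (Suc t))
        = (\<integral>\<^sup>+s. \<integral>\<^sup>+a. \<integral>\<^sup>+H. real (fs_next M s a H i)
             \<partial>Pi_pmf {1..M} False (\<lambda>j. bernoulli_pmf (p j)) \<partial>A \<partial>?D)"
    by simp
  also have "\<dots> = (\<integral>\<^sup>+s. \<integral>\<^sup>+a. ?K s * indicator (- {i}) a \<partial>A \<partial>?D)"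
    by (intro nn_integral_cong) (simp only: nn_integral_fs_next_counter[where p = p, OF i p], simp)
  also have "\<dots> = (\<integral>\<^sup>+s. ?K s * ennreal (1 - pmf A i) \<partial>?D)"
    by (intro nn_integral_cong) (simp add: nn_integral_cmult_indicator not_i)
  also have "\<dots> = (\<integral>\<^sup>+s. ennreal (growth_prob A p i) * (ennreal (real (s i)) + 1) \<partial>?D)"
  proof (intro nn_integral_cong)
    fix s :: fs_state
    have "?K s * ennreal (1 - pmf A i) = ennreal (growth_prob A p i * (real (s i) + 1))"
      using p by (simp add: growth_prob_def ennreal_mult'[symmetric] pmf_le_1 mult_ac)
    then show "?K s * ennreal (1 - pmf A i) = ennreal (growth_prob A p i) * (ennreal (real (s i)) + 1)"
      using p by (simp add: ennreal_mult growth_prob_nonneg)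
  qed
  also have "\<dots> = ennreal (growth_prob A p i) * ((\<integral>\<^sup>+s. real (s i) \<partial>?D) + 1)"
    by (simp add: nn_integral_cmult nn_integral_add)
  finally show ?thesis .
qed

lemma has_bochner_integral_counter:
  fixes A :: "nat pmf"
  assumes i: "i \<in> {1..M}" and p: "0 < p i" "p i \<le> 1"
  defines "c \<equiv> growth_prob A p i"
  shows "has_bochner_integral (fs_state_dist M p (\<lambda>_. A) t) (\<lambda>s. real (s i))
           (c / (1 - c) * (1 - c ^ t))"
proof (rule has_bochner_integral_nn_integral)
  have c: "0 \<le> c" "c < 1"
    unfolding c_def using p by (auto intro: growth_prob_nonneg growth_prob_less_1)
  have mean_nonneg: "0 \<le> c / (1 - c) * (1 - c ^ n)" for n
    using c by (simp add: power_le_one)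
  then show "0 \<le> c / (1 - c) * (1 - c ^ t)" .
  show "(\<integral>\<^sup>+s. real (s i) \<partial>fs_state_dist M p (\<lambda>_. A) t) = ennreal (c / (1 - c) * (1 - c ^ t))"
  proof (induction t)
    case 0
    then show ?case by simp
  next
    case (Suc t)
    have "(\<integral>\<^sup>+s. real (s i) \<partial>fs_state_dist M p (\<lambda>_. A) (Suc t))
          = ennreal c * ((\<integral>\<^sup>+s. real (s i) \<partial>fs_state_dist M p (\<lambda>_. A) t) + 1)"
      unfolding c_def using p by (intro nn_integral_counter_Suc i) auto
    also have "\<dots> = ennreal (c * (c / (1 - c) * (1 - c ^ t) + 1))"
      using Suc c mean_nonneg[of t] by (simp add: ennreal_mult ennreal_plus)
    also have "c * (c / (1 - c) * (1 - c ^ t) + 1) = c / (1 - c) * (1 - c ^ Suc t)"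
      using c by (simp add: field_simps)
    finally show ?case .
  qed
qed auto

lemma expectation_fs_cost_state_indep:
  assumes p: "\<forall>i\<in>{1..M}. 0 < p i \<and> p i \<le> 1"
  shows "measure_pmf.expectation (fs_state_dist M p (\<lambda>_. A) t) (fs_cost M phi)
         = (\<Sum>i=1..M. phi i * (growth_prob A p i / (1 - growth_prob A p i)
                                * (1 - growth_prob A p i ^ t)))"
  unfolding fs_cost_def
  using p by (intro has_bochner_integral_integral_eq has_bochner_integral_sum
      has_bochner_integral_mult_right has_bochner_integral_counter) auto

lemma Cesaro_one_minus_power:
  fixes c :: real
  assumes "\<bar>c\<bar> < 1"
  shows "(\<lambda>T. (\<Sum>t<T. 1 - c ^ t) / real T) \<longlonglongrightarrow> 1"
proof -
  have "(\<Sum>t<T. 1 - c ^ t) / real T = 1 - (1 - c ^ T) / (1 - c) * (1 / real T)" if "T \<ge> 1" for T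
    using that assms by (simp add: sum_subtractf sum_gp_strict field_simps)
  then have "\<forall>\<^sub>F T in sequentially. 1 - (1 - c ^ T) / (1 - c) * (1 / real T) = (\<Sum>t<T. 1 - c ^ t) / real T"
    by (intro eventually_sequentiallyI[of 1]) simp
  moreover have "(\<lambda>T. 1 - (1 - c ^ T) / (1 - c) * (1 / real T)) \<longlonglongrightarrow> 1 - (1 - 0) / (1 - c) * 0"
    using assms by (intro tendsto_intros lim_1_over_n LIMSEQ_power_zero) auto
  ultimately show ?thesis
    by (simp add: Lim_transform_eventually)
qed

lemma fs_avg_cost_state_indep:
  assumes p: "\<forall>i\<in>{1..M}. 0 < p i \<and> p i \<le> 1"
  shows "fs_avg_cost M phi p (\<lambda>_. A)
           \<longlonglongrightarrow> (\<Sum>i=1..M. phi i * (growth_prob A p i / (1 - growth_prob A p i)))"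
proof -
  let ?c = "growth_prob A p"
  have avg: "fs_avg_cost M phi p (\<lambda>_. A)
        = (\<lambda>T. \<Sum>i=1..M. phi i * (?c i / (1 - ?c i)) * ((\<Sum>t<T. 1 - ?c i ^ t) / real T))"
    unfolding fs_avg_cost_def expectation_fs_cost_state_indep[OF p]
    by (subst sum.swap) (simp add: sum_distrib_left sum_divide_distrib mult_ac)
  have "\<bar>?c i\<bar> < 1" if "i \<in> {1..M}" for i
    using p that growth_prob_nonneg growth_prob_less_1 by (metis abs_of_nonneg)
  then have "fs_avg_cost M phi p (\<lambda>_. A) \<longlonglongrightarrow> (\<Sum>i=1..M. phi i * (?c i / (1 - ?c i)) * 1)"
    unfolding avg by (intro tendsto_sum tendsto_mult_left Cesaro_one_minus_power)
  then show ?thesis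
    by simp
qed

lemma fs_avg_cost_order_policy:
  assumes G: "G \<ge> 1" and p: "\<forall>i\<in>{1..M}. 0 < p i \<and> p i \<le> 1"
  shows "fs_avg_cost M phi p (order_policy M G) \<longlonglongrightarrow>
           (\<Sum>i=1..M. (let q = (real i ^ G - real (i - 1) ^ G) / real M ^ G in
              phi i * (1 - q) * (1 - p i) / (1 - (1 - q) * (1 - p i))))"
proof -
  define A where "A = map_pmf (\<lambda>xs. Max (set xs)) (replicate_pmf G (pmf_of_set {1..M}))"
  have "order_policy M G = (\<lambda>_. A)"
    unfolding order_policy_def A_def ..
  moreover have "phi i * (growth_prob A p i / (1 - growth_prob A p i)) =
      (let q = (real i ^ G - real (i - 1) ^ G) / real M ^ G in
         phi i * (1 - q) * (1 - p i) / (1 - (1 - q) * (1 - p i)))" if "i \<in> {1..M}" for i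
    unfolding growth_prob_def A_def pmf_Max_replicate_pmf_of_set[OF G that] Let_def by simp
  ultimately show ?thesis
    using fs_avg_cost_state_indep[OF p, of phi A] sum.cong by (metis (no_types, lifting))
qed

lemma power_Suc_diff_le:
  fixes x :: real
  assumes "1 \<le> x"
  shows "x ^ Suc n - (x - 1) ^ Suc n \<le> real (Suc n) * x ^ n"
proof (induction n)
  case 0
  then show ?case by simp
next
  case (Suc n)
  have "x ^ Suc (Suc n) - (x - 1) ^ Suc (Suc n) = x * (x ^ Suc n - (x - 1) ^ Suc n) + (x - 1) ^ Suc n"
    by (simp add: algebra_simps)
  also have "\<dots> \<le> x * (real (Suc n) * x ^ n) + x ^ Suc n"
    using Suc assms by (intro add_mono mult_left_mono power_mono) auto
  also have "\<dots> = real (Suc (Suc n)) * x ^ Suc n"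
    by (simp add: algebra_simps)
  finally show ?case .
qed

lemma power_increment_div_bounds:
  assumes G: "G \<ge> 1" and i: "i \<in> {1..M}"
  shows "0 \<le> (real i ^ G - real (i - 1) ^ G) / real M ^ G"
    and "(real i ^ G - real (i - 1) ^ G) / real M ^ G \<le> real G / real M"
proof -
  show "0 \<le> (real i ^ G - real (i - 1) ^ G) / real M ^ G"
    using i by (intro divide_nonneg_nonneg) (auto intro!: power_mono)
  obtain g where g: "G = Suc g"
    using G by (cases G) auto
  have "real i ^ G - real (i - 1) ^ G \<le> real G * real i ^ g"
    unfolding g using i power_Suc_diff_le[of "real i" g] by (simp add: of_nat_diff)
  also have "\<dots> \<le> real G * real M ^ g"
    using i by (intro mult_left_mono power_mono) auto
  finally have "(real i ^ G - real (i - 1) ^ G) / real M ^ G \<le> real G * real M ^ g / real M ^ G"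
    by (simp add: divide_right_mono)
  also have "\<dots> = real G / real M"
    using i unfolding g by simp
  finally show "(real i ^ G - real (i - 1) ^ G) / real M ^ G \<le> real G / real M" .
qed

lemma odds_perturbation_le:
  fixes p q :: real
  assumes p: "0 < p" "p < 1" and q: "0 \<le> q"
  shows "\<bar>(1 - q) * (1 - p) / (1 - (1 - q) * (1 - p)) - (1 - p) / p\<bar> \<le> (1 - p) / p ^ 2 * q"
proof -
  define d where "d = 1 - (1 - q) * (1 - p)"
  have d: "d = p + q * (1 - p)"
    unfolding d_def by (simp add: algebra_simps)
  have "p \<le> d"
    using p q unfolding d by simp
  have "(1 - p) / p - (1 - q) * (1 - p) / d = (1 - p) * q / (p * d)"
    using \<open>p \<le> d\<close> p by (simp add: field_simps d)
  then have "\<bar>(1 - q) * (1 - p) / d - (1 - p) / p\<bar> = (1 - p) * q / (p * d)"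
    using \<open>p \<le> d\<close> p q by (simp add: abs_minus_commute)
  also have "\<dots> \<le> (1 - p) * q / (p * p)"
    using \<open>p \<le> d\<close> p q by (intro divide_left_mono mult_left_mono mult_nonneg_nonneg) auto
  finally show ?thesis
    unfolding d_def by (simp add: power2_eq_square)
qed

lemma sum_power_diff_atLeastAtMost:
  fixes \<sigma> :: real
  assumes "\<sigma> \<noteq> 1"
  shows "(\<Sum>i=1..M. \<sigma> ^ (M - i)) = (1 - \<sigma> ^ M) / (1 - \<sigma>)"
proof -
  have "(\<Sum>i=1..M. \<sigma> ^ (M - i)) = (\<Sum>k<M. \<sigma> ^ k)"
    by (rule sum.reindex_bij_witness[of _ "\<lambda>k. M - k" "\<lambda>i. M - i"]) auto
  then show ?thesis
    using assms by (simp add: sum_gp_strict)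
qed

lemma geometrically_weighted_sum_tendsto:
  fixes f :: "real \<Rightarrow> real" and q :: "nat \<Rightarrow> nat \<Rightarrow> real" and \<sigma> K C :: real
  assumes \<sigma>: "0 \<le> \<sigma>" "\<sigma> < 1" and K: "0 \<le> K"
    and f: "\<And>x. 0 \<le> x \<Longrightarrow> \<bar>f x - f 0\<bar> \<le> K * x"
    and q: "\<And>M i. i \<in> {1..M} \<Longrightarrow> 0 \<le> q M i \<and> q M i \<le> C / real M"
  shows "(\<lambda>M. \<Sum>i=1..M. \<sigma> ^ (M - i) * f (q M i)) \<longlonglongrightarrow> f 0 / (1 - \<sigma>)"
proof -
  define S where "S M = (\<Sum>i=1..M. \<sigma> ^ (M - i))" for M
  have S: "S M = (1 - \<sigma> ^ M) / (1 - \<sigma>)" for M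
    unfolding S_def using \<sigma> by (intro sum_power_diff_atLeastAtMost) auto
  have err: "\<bar>(\<Sum>i=1..M. \<sigma> ^ (M - i) * f (q M i)) - f 0 * S M\<bar> \<le> K * C / (1 - \<sigma>) * (1 / real M)"
    if M: "M \<ge> 1" for M
  proof -
    have C: "0 \<le> C / real M"
      using q[of M M] M by auto
    have "\<bar>(\<Sum>i=1..M. \<sigma> ^ (M - i) * f (q M i)) - f 0 * S M\<bar>
          = \<bar>\<Sum>i=1..M. \<sigma> ^ (M - i) * (f (q M i) - f 0)\<bar>"
      unfolding S_def by (simp add: sum_distrib_left sum_subtractf right_diff_distrib mult_ac)
    also have "\<dots> \<le> (\<Sum>i=1..M. \<sigma> ^ (M - i) * (K * (C / real M)))"
    proof (rule order_trans[OF sum_abs sum_mono])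
      fix i assume i: "i \<in> {1..M}"
      have "\<bar>f (q M i) - f 0\<bar> \<le> K * (C / real M)"
        using f[of "q M i"] q[OF i] K by (meson mult_left_mono order_trans)
      then have "\<sigma> ^ (M - i) * \<bar>f (q M i) - f 0\<bar> \<le> \<sigma> ^ (M - i) * (K * (C / real M))"
        using \<sigma> by (intro mult_left_mono) auto
      then show "\<bar>\<sigma> ^ (M - i) * (f (q M i) - f 0)\<bar> \<le> \<sigma> ^ (M - i) * (K * (C / real M))"
        using \<sigma> by (simp add: abs_mult)
    qed
    also have "\<dots> = S M * (K * (C / real M))"
      unfolding S_def by (rule sum_distrib_right[symmetric])
    also have "\<dots> \<le> 1 / (1 - \<sigma>) * (K * (C / real M))"
      unfolding S using \<sigma> mult_nonneg_nonneg[OF K C] by (intro mult_right_mono divide_right_mono) auto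
    finally show ?thesis
      by simp
  qed
  have "(\<lambda>M. (\<Sum>i=1..M. \<sigma> ^ (M - i) * f (q M i)) - f 0 * S M) \<longlonglongrightarrow> 0"
  proof (rule Lim_null_comparison)
    show "\<forall>\<^sub>F M in sequentially. norm ((\<Sum>i=1..M. \<sigma> ^ (M - i) * f (q M i)) - f 0 * S M)
            \<le> K * C / (1 - \<sigma>) * (1 / real M)"
      using err by (intro eventually_sequentiallyI[of 1]) auto
    show "(\<lambda>M. K * C / (1 - \<sigma>) * (1 / real M)) \<longlonglongrightarrow> 0"
      by (intro tendsto_mult_right_zero lim_1_over_n)
  qed
  moreover have "(\<lambda>M. f 0 * S M) \<longlonglongrightarrow> f 0 * ((1 - 0) / (1 - \<sigma>))"
    unfolding S using \<sigma> by (intro tendsto_intros LIMSEQ_power_zero) auto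
  ultimately show ?thesis
    using tendsto_add by fastforce
qed

lemma fs_J_order_policy_geometric_tendsto:
  fixes p \<sigma> :: real
  assumes G: "G \<ge> 1" and p: "0 < p" "p < 1" and \<sigma>: "0 \<le> \<sigma>" "\<sigma> < 1"
  shows "(\<lambda>M. fs_J M (\<lambda>i. \<sigma> ^ (M - i)) (\<lambda>_. p) (order_policy M G)) \<longlonglongrightarrow> (1 - p) / ((1 - \<sigma>) * p)"
proof -
  define odds where "odds x = (1 - x) * (1 - p) / (1 - (1 - x) * (1 - p))" for x
  define q where "q M i = (real i ^ G - real (i - 1) ^ G) / real M ^ G" for M i :: nat
  have "fs_J M (\<lambda>i. \<sigma> ^ (M - i)) (\<lambda>_. p) (order_policy M G) = (\<Sum>i=1..M. \<sigma> ^ (M - i) * odds (q M i))"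
    for M
    unfolding fs_J_def odds_def q_def
    using fs_avg_cost_order_policy[OF G, of M "\<lambda>_. p" "\<lambda>i. \<sigma> ^ (M - i)"] p
    by (intro limI) (simp add: Let_def mult.assoc)
  moreover have "(\<lambda>M. \<Sum>i=1..M. \<sigma> ^ (M - i) * odds (q M i)) \<longlonglongrightarrow> odds 0 / (1 - \<sigma>)"
  proof (rule geometrically_weighted_sum_tendsto)
    show "\<bar>odds x - odds 0\<bar> \<le> (1 - p) / p ^ 2 * x" if "0 \<le> x" for x
      unfolding odds_def using odds_perturbation_le[OF p that] by simp
    show "0 \<le> q M i \<and> q M i \<le> real G / real M" if "i \<in> {1..M}" for M i
      unfolding q_def using power_increment_div_bounds[OF G that] by simp
  qed (use p \<sigma> in auto)
  moreover have "odds 0 / (1 - \<sigma>) = (1 - p) / ((1 - \<sigma>) * p)"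
    unfolding odds_def by simp
  ultimately show ?thesis
    by simp
qed

theorem proposition3:
  fixes G :: nat
  assumes G: "G \<ge> 1"
  shows "(\<forall>(M::nat) (phi::nat \<Rightarrow> real) (p::nat \<Rightarrow> real).
            M \<ge> 1 \<longrightarrow> (\<forall>i\<in>{1..M}. 0 < phi i \<and> phi i \<le> 1) \<longrightarrow>
            (\<forall>i\<in>{1..M}. 0 < p i \<and> p i < 1) \<longrightarrow>
            fs_avg_cost M phi p (order_policy M G) \<longlonglongrightarrow>
              (\<Sum>i=1..M. (let q = (real i ^ G - real (i - 1) ^ G) / real M ^ G in
                  phi i * (1 - q) * (1 - p i) / (1 - (1 - q) * (1 - p i)))))
       \<and> (\<forall>(p::real) (\<sigma>::real). 0 < p \<and> p < 1 \<longrightarrow> 0 < \<sigma> \<and> \<sigma> < 1 \<longrightarrow>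
            (\<lambda>M. fs_J M (\<lambda>i. \<sigma> ^ (M - i)) (\<lambda>_. p) (order_policy M G))
              \<longlonglongrightarrow> (1 - p) / ((1 - \<sigma>) * p))"
proof (intro conjI allI impI)
  fix M :: nat and phi p :: "nat \<Rightarrow> real"
  assume "\<forall>i\<in>{1..M}. 0 < p i \<and> p i < 1"
  then show "fs_avg_cost M phi p (order_policy M G) \<longlonglongrightarrow>
              (\<Sum>i=1..M. (let q = (real i ^ G - real (i - 1) ^ G) / real M ^ G in
                  phi i * (1 - q) * (1 - p i) / (1 - (1 - q) * (1 - p i))))"
    by (intro fs_avg_cost_order_policy G) auto
next
  fix p \<sigma> :: real
  assume "0 < p \<and> p < 1" and "0 < \<sigma> \<and> \<sigma> < 1"
  then show "(\<lambda>M. fs_J M (\<lambda>i. \<sigma> ^ (M - i)) (\<lambda>_. p) (order_policy M G))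
              \<longlonglongrightarrow> (1 - p) / ((1 - \<sigma>) * p)"
    by (intro fs_J_order_policy_geometric_tendsto G) auto
qed

end
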